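(* Let $X\in\mathbb{R}^{m\times n}$ be fixed, $V=\frac1nXX^\top$, $W^K,W^Q\in\mathbb{R}^{n\times n_k}$ and $W\in\mathbb{R}^{n\times n}$ independent with i.i.d. $\mathcal N(0,1)$ entries, $Y=\frac1nXW^KW^{Q,\top}X^\top$, $\tau>0$, $A=I+\mathrm{Softmax}(\tau^{-1}Y)-\frac1m\mathbf 1\mathbf 1^\top$ (Softmax row-wise), and $$\mathcal T_1^{\alpha\beta}=\frac1n\big(XW^\top X^\top A^\top+AXWX^\top\big)^{\alpha\beta}.$$ Then $\mathbb{E}[\mathcal T_1^{\alpha\beta}]=0$ and $$\mathbb{E}[\mathcal T_1^{\alpha\beta}\mathcal T_1^{\delta\omega}]=2\big(V^{\alpha\delta}V^{\beta\omega}+V^{\alpha\omega}V^{\beta\delta}\big)+O(n_k\tau^{-2}).$$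
   Context: $O(n_k\tau^{-2})$ denotes a remainder bounded by a constant (independent of $\tau$) times $n_k\tau^{-2}$ as $\tau\to\infty$. *)

theory Defs
  imports "HOL-Probability.Probability"
begin

text \<open>Matrices are represented as functions nat => nat => real, with the
relevant index bounds made explicit in every sum (0-based indices).\<close>

text \<open>Index set of the Gaussian entries: WK i k, WQ i k (i < n, k < nk), and W i j (i,j < n).\<close>
datatype gidx = GK nat nat | GQ nat nat | GW nat nat

definition gauss_index :: "nat \<Rightarrow> nat \<Rightarrow> gidx set" where
  "gauss_index n nk =
     {GK i k | i k. i < n \<and> k < nk} \<union> {GQ i k | i k. i < n \<and> k < nk} \<union> {GW i j | i j. i < n \<and> j < n}"

definition Vmat :: "nat \<Rightarrow> (nat \<Rightarrow> nat \<Rightarrow> real) \<Rightarrow> nat \<Rightarrow> nat \<Rightarrow> real" where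
  "Vmat n X a b = (1 / real n) * (\<Sum>i<n. X a i * X b i)"

definition Ymat :: "nat \<Rightarrow> nat \<Rightarrow> (nat \<Rightarrow> nat \<Rightarrow> real) \<Rightarrow> (nat \<Rightarrow> nat \<Rightarrow> real)
    \<Rightarrow> (nat \<Rightarrow> nat \<Rightarrow> real) \<Rightarrow> nat \<Rightarrow> nat \<Rightarrow> real" where
  "Ymat n nk X WK WQ a b =
     (1 / real n) * (\<Sum>i<n. \<Sum>j<n. \<Sum>k<nk. X a i * WK i k * WQ j k * X b j)"

definition softmax_rows :: "nat \<Rightarrow> (nat \<Rightarrow> nat \<Rightarrow> real) \<Rightarrow> nat \<Rightarrow> nat \<Rightarrow> real" where
  "softmax_rows m Z a b = exp (Z a b) / (\<Sum>c<m. exp (Z a c))"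

definition Amat :: "nat \<Rightarrow> nat \<Rightarrow> nat \<Rightarrow> (nat \<Rightarrow> nat \<Rightarrow> real) \<Rightarrow> (nat \<Rightarrow> nat \<Rightarrow> real)
    \<Rightarrow> (nat \<Rightarrow> nat \<Rightarrow> real) \<Rightarrow> real \<Rightarrow> nat \<Rightarrow> nat \<Rightarrow> real" where
  "Amat m n nk X WK WQ \<tau> a b =
     (if a = b then 1 else 0)
     + softmax_rows m (\<lambda>c d. Ymat n nk X WK WQ c d / \<tau>) a b
     - 1 / real m"

definition T1 :: "nat \<Rightarrow> nat \<Rightarrow> nat \<Rightarrow> (nat \<Rightarrow> nat \<Rightarrow> real) \<Rightarrow> (nat \<Rightarrow> nat \<Rightarrow> real)
    \<Rightarrow> (nat \<Rightarrow> nat \<Rightarrow> real) \<Rightarrow> (nat \<Rightarrow> nat \<Rightarrow> real) \<Rightarrow> real \<Rightarrow> nat \<Rightarrow> nat \<Rightarrow> real" where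
  "T1 m n nk X WK WQ W \<tau> a b =
     (let A = Amat m n nk X WK WQ \<tau> in
      (1 / real n) *
        ((\<Sum>i<n. \<Sum>j<n. \<Sum>c<m. X a i * W j i * X c j * A b c)
       + (\<Sum>c<m. \<Sum>i<n. \<Sum>j<n. A a c * X c i * W i j * X b j)))"

end

theory Submission
  imports Defs
begin

(* The value weights W enter T1 linearly: T1^{ab} = sum_{p,q} W_pq F_pq^{ab}(A), where the
   coefficients F are linear in the attention matrix A, and A is a function of W^K, W^Q alone,
   hence independent of W. Therefore E T1 = 0 and, since E[W_pq W_rt] = [p = r][q = t],
   E[T1^{ab} T1^{dw}] = sum_{p,q} E[F_pq^{ab}(A) F_pq^{dw}(A)].
   Write A = I + D with D = Softmax(Y/tau) - 1/m. The identity part contributes exactly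
   2 (V^{ad} V^{bw} + V^{aw} V^{bd}). Pointwise D = O(|Y|/tau), and the first-order term of the
   softmax expansion at the uniform distribution is linear in Y, which is centred; so E D and
   every term involving D in the second moment are O(E|Y|^2 / tau^2), uniformly in tau. *)

section \<open>Softmax near the uniform distribution\<close>

lemma abs_exp_minus_one_minus_le:
  fixes x :: real
  shows "\<bar>exp x - 1 - x\<bar> \<le> exp \<bar>x\<bar> * x\<^sup>2 / 2"
proof -
  obtain t where t: "\<bar>t\<bar> \<le> \<bar>x\<bar>"
    and taylor: "exp x = (\<Sum>k<2. x ^ k / fact k) + exp t / fact 2 * x ^ 2"
    using Maclaurin_exp_le[of x 2] by blast
  have "\<bar>exp x - 1 - x\<bar> = exp t * x\<^sup>2 / 2"
    using taylor by (simp add: numeral_2_eq_2)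
  also have "\<dots> \<le> exp \<bar>x\<bar> * x\<^sup>2 / 2"
    using t by (intro divide_right_mono mult_right_mono) auto
  finally show ?thesis .
qed

lemma abs_sum_lessThan_le:
  fixes z :: "nat \<Rightarrow> real"
  assumes "\<And>c. c < m \<Longrightarrow> \<bar>z c\<bar> \<le> M"
  shows "\<bar>\<Sum>c<m. z c\<bar> \<le> m * M"
  using order_trans[OF sum_abs sum_bounded_above[of "{..<m}" "\<lambda>c. \<bar>z c\<bar>" M]] assms by simp

lemma abs_minus_mean_le:
  fixes z :: "nat \<Rightarrow> real"
  assumes "b < m" "\<And>c. c < m \<Longrightarrow> \<bar>z c\<bar> \<le> M"
  shows "\<bar>z b - (\<Sum>c<m. z c) / m\<bar> \<le> 2 * M"
proof -
  have "\<bar>(\<Sum>c<m. z c) / m\<bar> \<le> M"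
    using abs_sum_lessThan_le[OF assms(2)] assms(1) by (simp add: divide_le_eq mult.commute)
  then show ?thesis
    using assms(2)[OF assms(1)] by linarith
qed

lemma sum_exp_ge_third:
  fixes z :: "nat \<Rightarrow> real"
  assumes "\<And>c. c < m \<Longrightarrow> -1 \<le> z c"
  shows "m / 3 \<le> (\<Sum>c<m. exp (z c))"
proof -
  have "1 / 3 \<le> exp (z c)" if "c < m" for c
  proof -
    have "(1 / 3 :: real) \<le> exp (-1)"
      using exp_le by (simp add: exp_minus divide_simps)
    also have "\<dots> \<le> exp (z c)"
      using assms[OF that] by simp
    finally show ?thesis .
  qed
  then have "(\<Sum>c<m. 1 / 3) \<le> (\<Sum>c<m. exp (z c))"
    by (intro sum_mono) auto
  then show ?thesis by simp
qed

lemma abs_softmax_rows_minus_uniform_le_one: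
  assumes "b < m"
  shows "\<bar>softmax_rows m Z a b - 1 / real m\<bar> \<le> 1"
proof -
  have "exp (Z a b) \<le> (\<Sum>c<m. exp (Z a c))" "0 < (\<Sum>c<m. exp (Z a c))"
    using assms by (auto intro: member_le_sum sum_pos)
  then have "0 < softmax_rows m Z a b" "softmax_rows m Z a b \<le> 1"
    by (auto simp: softmax_rows_def)
  moreover have "0 < 1 / real m" "1 / real m \<le> 1"
    using assms by auto
  ultimately show ?thesis by linarith
qed

lemma abs_exp_minus_one_minus_le_sq:
  fixes x :: real
  assumes "\<bar>x\<bar> \<le> M" "M \<le> 1"
  shows "\<bar>exp x - 1 - x\<bar> \<le> 3/2 * M\<^sup>2"
proof -
  have "\<bar>exp x - 1 - x\<bar> \<le> exp \<bar>x\<bar> * x\<^sup>2 / 2"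
    by (rule abs_exp_minus_one_minus_le)
  also have "\<dots> \<le> 3 * M\<^sup>2 / 2"
  proof (intro divide_right_mono mult_mono)
    show "exp \<bar>x\<bar> \<le> 3"
      using exp_le assms by (meson exp_le_cancel_iff order_trans)
    show "x\<^sup>2 \<le> M\<^sup>2"
      using power_mono[OF assms(1), of 2] by simp
  qed auto
  finally show ?thesis by simp
qed

lemma softmax_remainder_eq:
  fixes z :: "nat \<Rightarrow> real"
  assumes "b < m"
  defines "S \<equiv> \<Sum>c<m. exp (z c)" and "Z \<equiv> \<Sum>c<m. z c" and "U \<equiv> \<Sum>c<m. exp (z c) - 1 - z c"
  shows "exp (z b) / S - 1 / m - (z b - Z / m) / m
    = (m * (exp (z b) - 1 - z b) - U - (z b - Z / m) * (Z + U)) / (m * S)"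
proof -
  have m: "real m \<noteq> 0"
    using assms(1) by simp
  have "0 < S"
    unfolding S_def using assms(1) by (intro sum_pos) auto
  then have S: "S \<noteq> 0" by simp
  have "S = m + Z + U"
    unfolding S_def Z_def U_def by (simp add: sum.distrib sum_subtractf)
  then have "m * exp (z b) - S - (z b - Z / m) * S
      = m * (exp (z b) - 1 - z b) - U - (z b - Z / m) * (Z + U)"
    using m by (simp add: field_simps)
  moreover have "exp (z b) / S - 1 / m - (z b - Z / m) / m
      = (m * exp (z b) - S - (z b - Z / m) * S) / (m * S)"
    using m S by (simp add: field_simps)
  ultimately show ?thesis by simp
qed

lemma softmax_linearization_le_one:
  fixes z :: "nat \<Rightarrow> real"
  assumes b: "b < m" and M: "M \<le> 1" and z: "\<And>c. c < m \<Longrightarrow> \<bar>z c\<bar> \<le> M"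
  shows "\<bar>exp (z b) / (\<Sum>c<m. exp (z c)) - 1 / m - (z b - (\<Sum>c<m. z c) / m) / m\<bar> \<le> 24 * M\<^sup>2"
proof -
  define S where "S = (\<Sum>c<m. exp (z c))"
  define Z where "Z = (\<Sum>c<m. z c)"
  define U where "U = (\<Sum>c<m. exp (z c) - 1 - z c)"
  have m: "real m \<ge> 1" using b by simp
  have M0: "0 \<le> M" using z[OF b] by linarith
  have u: "\<bar>exp (z c) - 1 - z c\<bar> \<le> 3/2 * M\<^sup>2" if "c < m" for c
    using z[OF that] M by (rule abs_exp_minus_one_minus_le_sq)
  have Z: "\<bar>Z\<bar> \<le> m * M"
    unfolding Z_def using z by (rule abs_sum_lessThan_le)
  have U: "\<bar>U\<bar> \<le> m * (3/2 * M\<^sup>2)"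
    unfolding U_def using u by (rule abs_sum_lessThan_le)
  have lin: "\<bar>z b - Z / m\<bar> \<le> 2 * M"
    unfolding Z_def using b z by (rule abs_minus_mean_le)
  have S: "S \<ge> m / 3"
    unfolding S_def using z M by (intro sum_exp_ge_third) (force simp: abs_le_iff)
  have "\<bar>m * (exp (z b) - 1 - z b) - U - (z b - Z / m) * (Z + U)\<bar>
      \<le> m * (3/2 * M\<^sup>2) + m * (3/2 * M\<^sup>2) + 2 * M * (m * M + m * (3/2 * M\<^sup>2))"
  proof -
    have "\<bar>m * (exp (z b) - 1 - z b)\<bar> \<le> m * (3/2 * M\<^sup>2)"
      using u[OF b] m by (simp add: abs_mult)
    moreover have "\<bar>(z b - Z / m) * (Z + U)\<bar> \<le> 2 * M * (m * M + m * (3/2 * M\<^sup>2))"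
      unfolding abs_mult using lin Z U M0 by (intro mult_mono) auto
    ultimately show ?thesis using U by (simp add: abs_le_iff) linarith
  qed
  also have "\<dots> \<le> 8 * m * M\<^sup>2"
  proof -
    have "m * (M * M\<^sup>2) \<le> m * M\<^sup>2"
      using M M0 by (intro mult_left_mono) (auto simp: mult_left_le_one_le)
    then show ?thesis by (simp add: power2_eq_square algebra_simps)
  qed
  finally have "\<bar>(m * (exp (z b) - 1 - z b) - U - (z b - Z / m) * (Z + U)) / (m * S)\<bar>
      \<le> 8 * m * M\<^sup>2 / (m * (m / 3))"
    using S m by (intro frac_le abs_divide[THEN ord_eq_le_trans]) (auto intro!: mult_left_mono)
  also have "\<dots> = 24 * M\<^sup>2 / m"
    using m by (simp add: field_simps)
  also have "\<dots> \<le> 24 * M\<^sup>2"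
    using m by (simp add: divide_le_eq mult_le_cancel_left1)
  finally show ?thesis
    unfolding S_def Z_def U_def softmax_remainder_eq[OF b, symmetric] .
qed

lemma softmax_rows_deviation_bounds:
  assumes b: "b < m" and Z: "\<And>c. c < m \<Longrightarrow> \<bar>Z a c\<bar> \<le> M"
  shows abs_softmax_rows_minus_uniform_le: "\<bar>softmax_rows m Z a b - 1 / m\<bar> \<le> 26 * M"
    and abs_softmax_rows_minus_linearization_le:
      "\<bar>softmax_rows m Z a b - 1 / m - (Z a b - (\<Sum>c<m. Z a c) / m) / m\<bar> \<le> 26 * M\<^sup>2"
proof -
  define l where "l = (Z a b - (\<Sum>c<m. Z a c) / m) / m"
  have "\<bar>Z a b - (\<Sum>c<m. Z a c) / m\<bar> \<le> 2 * M"
    using b Z by (rule abs_minus_mean_le)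
  moreover have "\<bar>l\<bar> \<le> \<bar>Z a b - (\<Sum>c<m. Z a c) / m\<bar>"
    unfolding l_def using b by (simp add: divide_le_eq mult_le_cancel_left1)
  ultimately have lin: "\<bar>l\<bar> \<le> 2 * M" by linarith
  have dev: "\<bar>softmax_rows m Z a b - 1 / m\<bar> \<le> 1"
    using b by (rule abs_softmax_rows_minus_uniform_le_one)
  have M0: "0 \<le> M" using Z[OF b] by linarith
  have small: "\<bar>softmax_rows m Z a b - 1 / m - l\<bar> \<le> 24 * M\<^sup>2" if "M \<le> 1"
    unfolding softmax_rows_def l_def using b that Z by (rule softmax_linearization_le_one)
  show "\<bar>softmax_rows m Z a b - 1 / m\<bar> \<le> 26 * M"
  proof (cases "M \<le> 1")
    case True
    then have "M\<^sup>2 \<le> M"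
      using M0 by (simp add: power2_eq_square mult_left_le_one_le)
    then show ?thesis using small[OF True] lin by linarith
  next
    case False
    then show ?thesis using dev by linarith
  qed
  show "\<bar>softmax_rows m Z a b - 1 / m - l\<bar> \<le> 26 * M\<^sup>2"
  proof (cases "M \<le> 1")
    case True
    then show ?thesis using small[OF True] by simp
  next
    case False
    then have "M \<le> M\<^sup>2" by (simp add: power2_eq_square)
    then show ?thesis using dev lin False by linarith
  qed
qed

lemma sum_sum_mult_sum_sum:
  fixes f g :: "'a \<Rightarrow> 'b \<Rightarrow> 'c :: semiring_0"
  shows "(\<Sum>i\<in>A. \<Sum>j\<in>B. f i j) * (\<Sum>k\<in>C. \<Sum>l\<in>D. g k l)
    = (\<Sum>i\<in>A. \<Sum>j\<in>B. \<Sum>k\<in>C. \<Sum>l\<in>D. f i j * g k l)"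
  by (simp only: sum_distrib_right) (simp only: sum_distrib_left)

lemma sum_sum_delta:
  assumes "finite A" "finite B" "i \<in> A" "j \<in> B"
  shows "(\<Sum>k\<in>A. \<Sum>l\<in>B. if i = k \<and> j = l then f k l else 0) = f i j"
proof -
  have "(\<Sum>l\<in>B. if i = k \<and> j = l then f k l else 0) = (if i = k then f k j else 0)" for k
    using assms by (cases "i = k") simp_all
  then show ?thesis using assms by simp
qed

lemma abs_mult_le_sum_squares: "\<bar>x * y\<bar> \<le> x\<^sup>2 + (y :: real)\<^sup>2"
proof -
  have "2 * \<bar>x\<bar> * \<bar>y\<bar> \<le> x\<^sup>2 + y\<^sup>2" "0 \<le> \<bar>x\<bar> * \<bar>y\<bar>"
    using sum_squares_bound[of "\<bar>x\<bar>" "\<bar>y\<bar>"] by simp_all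
  then show ?thesis unfolding abs_mult by linarith
qed

lemma integral_sum_sum:
  fixes f :: "'a \<Rightarrow> 'b \<Rightarrow> 's \<Rightarrow> real"
  assumes "\<And>i j. i \<in> A \<Longrightarrow> j \<in> B \<Longrightarrow> integrable M (f i j)"
  shows "(\<integral>s. (\<Sum>i\<in>A. \<Sum>j\<in>B. f i j s) \<partial>M) = (\<Sum>i\<in>A. \<Sum>j\<in>B. integral\<^sup>L M (f i j))"
  using assms by (simp add: Bochner_Integration.integral_sum)

lemma integral_sum_eq_zero:
  fixes f :: "'a \<Rightarrow> 's \<Rightarrow> real"
  assumes "\<And>i. i \<in> I \<Longrightarrow> integrable M (f i)" "\<And>i. i \<in> I \<Longrightarrow> integral\<^sup>L M (f i) = 0"
  shows "(\<integral>s. (\<Sum>i\<in>I. f i s) \<partial>M) = 0"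
  using assms by (simp add: Bochner_Integration.integral_sum)

lemma abs_integral_le_integral:
  fixes f g :: "'a \<Rightarrow> real"
  assumes "integrable M f" "integrable M g" "\<And>x. x \<in> space M \<Longrightarrow> \<bar>f x\<bar> \<le> g x"
  shows "\<bar>integral\<^sup>L M f\<bar> \<le> integral\<^sup>L M g"
proof -
  have "\<bar>integral\<^sup>L M f\<bar> \<le> (\<integral>x. \<bar>f x\<bar> \<partial>M)"
    using integral_norm_bound[of M f] by simp
  also have "\<dots> \<le> integral\<^sup>L M g"
    using assms by (intro integral_mono) auto
  finally show ?thesis .
qed

lemma measurable_component_borel [measurable]:
  "(\<lambda>x. x j) \<in> borel_measurable (PiM K (\<lambda>_. (borel :: real measure)))"
proof (cases "j \<in> K")
  case True
  then show ?thesis by (rule measurable_component_singleton)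
next
  case False
  have "(\<lambda>x. x j) \<in> borel_measurable (PiM K (\<lambda>_. (borel :: real measure)))
      \<longleftrightarrow> (\<lambda>x. undefined :: real) \<in> borel_measurable (PiM K (\<lambda>_. (borel :: real measure)))"
    by (rule measurable_cong) (use False in \<open>auto simp: space_PiM PiE_def extensional_def\<close>)
  then show ?thesis by simp
qed

lemma (in prob_space) indep_var_disjoint_blocks:
  assumes "indep_vars (\<lambda>_. borel) G I" "K \<inter> L = {}" "K \<subseteq> I" "L \<subseteq> I"
    and "f \<in> borel_measurable (PiM K (\<lambda>_. borel))" "g \<in> borel_measurable (PiM L (\<lambda>_. borel))"
    and "\<And>s. F s = f (restrict (\<lambda>i. G i s) K)" "\<And>s. H s = g (restrict (\<lambda>i. G i s) L)"
  shows "indep_var borel F borel H"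
proof -
  have "F = f \<circ> (\<lambda>s. restrict (\<lambda>i. G i s) K)" "H = g \<circ> (\<lambda>s. restrict (\<lambda>i. G i s) L)"
    using assms(7,8) by auto
  then show ?thesis
    using indep_var_compose[OF indep_var_restrict[OF assms(1-4)] assms(5,6)] by simp
qed

section \<open>Independent standard normal families\<close>

locale std_normal_family = prob_space M for M :: "'s measure" +
  fixes G :: "'i \<Rightarrow> 's \<Rightarrow> real" and I :: "'i set"
  assumes indep: "indep_vars (\<lambda>_. borel) G I"
    and std_normal: "\<And>i. i \<in> I \<Longrightarrow> distributed M lborel (G i) std_normal_density"
begin

lemma measurable_entry [measurable]: "i \<in> I \<Longrightarrow> G i \<in> borel_measurable M"
  using indep by (auto simp: indep_vars_def)

lemma integrable_entry_power: "i \<in> I \<Longrightarrow> integrable M (\<lambda>s. G i s ^ k)"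
  using distributed_integrable[OF std_normal, of i "\<lambda>x. x ^ k"] integrable_std_normal_moment[of k]
  by (simp add: normal_density_nonneg)

lemma integrable_entry: "i \<in> I \<Longrightarrow> integrable M (G i)"
  using integrable_entry_power[of i 1] by simp

lemma expectation_entry: "i \<in> I \<Longrightarrow> expectation (G i) = 0"
  by (rule standard_normal_distributed_expectation[OF std_normal])

lemma expectation_entry_square: "i \<in> I \<Longrightarrow> expectation (\<lambda>s. (G i s)\<^sup>2) = 1"
  using distributed_integral[OF std_normal, of i "\<lambda>x. x\<^sup>2"] integral_std_normal_moment_even[of 1]
  by (simp add: normal_density_nonneg)

lemma integrable_entry_mult:
  assumes "i \<in> I" "j \<in> I"
  shows "integrable M (\<lambda>s. G i s * G j s)"
proof (rule Bochner_Integration.integrable_bound)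
  show "integrable M (\<lambda>s. (G i s)\<^sup>2 + (G j s)\<^sup>2)"
    using assms by (intro Bochner_Integration.integrable_add integrable_entry_power)
  show "AE s in M. norm (G i s * G j s) \<le> norm ((G i s)\<^sup>2 + (G j s)\<^sup>2)"
    using abs_mult_le_sum_squares by (intro AE_I2) simp
qed (use assms in measurable)

lemma integrable_entry_mult_pairs:
  assumes "i \<in> I" "j \<in> I" "i' \<in> I" "j' \<in> I"
  shows "integrable M (\<lambda>s. (c * (G i s * G j s)) * (c' * (G i' s * G j' s)))"
proof -
  have bound: "\<bar>(x * y) * (x' * y')\<bar> \<le> x ^ 4 + y ^ 4 + x' ^ 4 + y' ^ 4" for x y x' y' :: real
  proof -
    have "\<bar>(x * y) * (x' * y')\<bar> \<le> (x * y)\<^sup>2 + (x' * y')\<^sup>2"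
      by (rule abs_mult_le_sum_squares)
    also have "\<dots> = \<bar>x\<^sup>2 * y\<^sup>2\<bar> + \<bar>x'\<^sup>2 * y'\<^sup>2\<bar>"
      by (simp add: power_mult_distrib)
    also have "\<dots> \<le> ((x\<^sup>2)\<^sup>2 + (y\<^sup>2)\<^sup>2) + ((x'\<^sup>2)\<^sup>2 + (y'\<^sup>2)\<^sup>2)"
      by (intro add_mono abs_mult_le_sum_squares)
    finally show ?thesis by simp
  qed
  have "integrable M (\<lambda>s. (G i s * G j s) * (G i' s * G j' s))"
  proof (rule Bochner_Integration.integrable_bound)
    show "integrable M (\<lambda>s. G i s ^ 4 + G j s ^ 4 + G i' s ^ 4 + G j' s ^ 4)"
      using assms by (intro Bochner_Integration.integrable_add integrable_entry_power)
    show "AE s in M. norm ((G i s * G j s) * (G i' s * G j' s))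
        \<le> norm (G i s ^ 4 + G j s ^ 4 + G i' s ^ 4 + G j' s ^ 4)"
      using bound by (intro AE_I2) (simp add: order_trans[OF _ abs_ge_self])
  qed (use assms in measurable)
  then show ?thesis
    using integrable_mult_right[of "c * c'"] by (simp add: mult_ac)
qed

lemma expectation_entry_mult:
  assumes "i \<in> I" "j \<in> I"
  shows "expectation (\<lambda>s. G i s * G j s) = (if i = j then 1 else 0)"
proof (cases "i = j")
  case True
  then show ?thesis using expectation_entry_square[OF assms(1)] by (simp add: power2_eq_square)
next
  case False
  have "indep_var borel (G i) borel (G j)"
    by (rule indep_var_disjoint_blocks[OF indep, of "{i}" "{j}" "\<lambda>x. x i" "\<lambda>x. x j"])
       (use assms False in auto)
  then have "expectation (\<lambda>s. G i s * G j s) = expectation (G i) * expectation (G j)"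
    using assms by (intro indep_var_lebesgue_integral integrable_entry)
  then show ?thesis using False expectation_entry[OF assms(1)] by simp
qed

end

section \<open>T1 as a linear form in the value weights\<close>

definition T1_coeff :: "nat \<Rightarrow> nat \<Rightarrow> (nat \<Rightarrow> nat \<Rightarrow> real) \<Rightarrow> (nat \<Rightarrow> nat \<Rightarrow> real)
    \<Rightarrow> nat \<Rightarrow> nat \<Rightarrow> nat \<Rightarrow> nat \<Rightarrow> real" where
  "T1_coeff m n X A p q a b =
     (1 / real n) * (X a q * (\<Sum>c<m. X c p * A b c) + (\<Sum>c<m. A a c * X c p) * X b q)"

definition T1_coeff_id :: "nat \<Rightarrow> (nat \<Rightarrow> nat \<Rightarrow> real) \<Rightarrow> nat \<Rightarrow> nat \<Rightarrow> nat \<Rightarrow> nat \<Rightarrow> real" where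
  "T1_coeff_id n X p q a b = (1 / real n) * (X a q * X b p + X a p * X b q)"

definition mat_abs_sum :: "nat \<Rightarrow> nat \<Rightarrow> (nat \<Rightarrow> nat \<Rightarrow> real) \<Rightarrow> real" where
  "mat_abs_sum m n X = (\<Sum>i<m. \<Sum>j<n. \<bar>X i j\<bar>)"

lemma T1_eq_sum_T1_coeff:
  "T1 m n nk X WK WQ W \<tau> a b
     = (\<Sum>p<n. \<Sum>q<n. W p q * T1_coeff m n X (Amat m n nk X WK WQ \<tau>) p q a b)"
proof -
  define A where "A = Amat m n nk X WK WQ \<tau>"
  have left: "(\<Sum>i<n. \<Sum>j<n. \<Sum>c<m. X a i * W j i * X c j * A b c)
      = (\<Sum>p<n. \<Sum>q<n. W p q * (X a q * (\<Sum>c<m. X c p * A b c)))"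
    by (subst sum.swap) (simp add: sum_distrib_left mult_ac)
  have "(\<Sum>c<m. \<Sum>i<n. \<Sum>j<n. A a c * X c i * W i j * X b j)
      = (\<Sum>i<n. \<Sum>j<n. \<Sum>c<m. A a c * X c i * W i j * X b j)"
    by (subst sum.swap) (intro sum.cong refl sum.swap)
  also have "\<dots> = (\<Sum>p<n. \<Sum>q<n. W p q * ((\<Sum>c<m. A a c * X c p) * X b q))"
    by (simp add: sum_distrib_left sum_distrib_right mult_ac)
  finally have right: "(\<Sum>c<m. \<Sum>i<n. \<Sum>j<n. A a c * X c i * W i j * X b j)
      = (\<Sum>p<n. \<Sum>q<n. W p q * ((\<Sum>c<m. A a c * X c p) * X b q))" .
  show ?thesis
    unfolding T1_def Let_def A_def[symmetric] T1_coeff_def left right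
    by (simp add: sum_distrib_left sum.distrib algebra_simps)
qed

lemma T1_coeff_add:
  "T1_coeff m n X (\<lambda>a c. A a c + B a c) p q a b = T1_coeff m n X A p q a b + T1_coeff m n X B p q a b"
  unfolding T1_coeff_def by (simp add: sum.distrib algebra_simps)

lemma T1_coeff_identity:
  assumes "a < m" "b < m"
  shows "T1_coeff m n X (\<lambda>a c. if a = c then 1 else 0) p q a b = T1_coeff_id n X p q a b"
  using assms by (simp add: T1_coeff_def T1_coeff_id_def if_distrib if_distribR sum.delta cong: if_cong)

lemma sum_T1_coeff_id_products:
  "(\<Sum>p<n. \<Sum>q<n. T1_coeff_id n X p q a b * T1_coeff_id n X p q d w)
     = 2 * (Vmat n X a d * Vmat n X b w + Vmat n X a w * Vmat n X b d)"
proof -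
  have factor: "(\<Sum>p<n. \<Sum>q<n. f p * g q) = (\<Sum>p<n. f p) * (\<Sum>q<n. g q)" for f g :: "nat \<Rightarrow> real"
    by (simp add: sum_product)
  have "(\<Sum>p<n. \<Sum>q<n. T1_coeff_id n X p q a b * T1_coeff_id n X p q d w)
     = ((\<Sum>p<n. \<Sum>q<n. (X b p * X w p) * (X a q * X d q)) + (\<Sum>p<n. \<Sum>q<n. (X b p * X d p) * (X a q * X w q))
      + (\<Sum>p<n. \<Sum>q<n. (X a p * X w p) * (X b q * X d q)) + (\<Sum>p<n. \<Sum>q<n. (X a p * X d p) * (X b q * X w q)))
       / (real n)\<^sup>2"
    unfolding T1_coeff_id_def
    by (simp add: sum_divide_distrib[symmetric] sum.distrib add_divide_distrib power2_eq_square algebra_simps)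
  also have "\<dots> = 2 * (Vmat n X a d * Vmat n X b w + Vmat n X a w * Vmat n X b d)"
    unfolding factor Vmat_def by (simp add: power2_eq_square add_divide_distrib algebra_simps)
  finally show ?thesis .
qed

lemma abs_le_mat_abs_sum: "i < m \<Longrightarrow> j < n \<Longrightarrow> \<bar>X i j\<bar> \<le> mat_abs_sum m n X"
  unfolding mat_abs_sum_def
  by (rule order_trans[OF member_le_sum member_le_sum[of i]]) (auto intro: sum_nonneg)

lemma column_abs_sum_le_mat_abs_sum: "j < n \<Longrightarrow> (\<Sum>c<m. \<bar>X c j\<bar>) \<le> mat_abs_sum m n X"
  unfolding mat_abs_sum_def by (intro sum_mono member_le_sum) auto

lemma abs_T1_coeff_le:
  assumes A: "\<And>a c. a < m \<Longrightarrow> c < m \<Longrightarrow> \<bar>A a c\<bar> \<le> K"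
    and ab: "a < m" "b < m" and pq: "p < n" "q < n"
  shows "\<bar>T1_coeff m n X A p q a b\<bar> \<le> 2 * K * (mat_abs_sum m n X)\<^sup>2"
proof -
  define B where "B = mat_abs_sum m n X"
  have K: "0 \<le> K" using A[OF ab(1) ab(1)] by linarith
  have B: "0 \<le> B" unfolding B_def mat_abs_sum_def by (intro sum_nonneg) auto
  have row: "\<bar>\<Sum>c<m. X c p * A r c\<bar> \<le> B * K" if "r < m" for r
  proof -
    have "\<bar>\<Sum>c<m. X c p * A r c\<bar> \<le> (\<Sum>c<m. \<bar>X c p\<bar> * K)"
      using A[OF that] by (intro order_trans[OF sum_abs] sum_mono) (simp add: abs_mult mult_left_mono)
    also have "\<dots> \<le> B * K"
      unfolding B_def sum_distrib_right[symmetric]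
      using column_abs_sum_le_mat_abs_sum[OF pq(1)] K by (rule mult_right_mono)
    finally show ?thesis .
  qed
  have Xa: "\<bar>X a q\<bar> \<le> B" and Xb: "\<bar>X b q\<bar> \<le> B"
    using abs_le_mat_abs_sum ab pq unfolding B_def by auto
  have "\<bar>X a q * (\<Sum>c<m. X c p * A b c)\<bar> \<le> B * (B * K)"
    unfolding abs_mult using Xa row[OF ab(2)] B by (intro mult_mono) auto
  moreover have "\<bar>(\<Sum>c<m. A a c * X c p) * X b q\<bar> \<le> (B * K) * B"
    unfolding abs_mult using Xb row[OF ab(1)] B K by (intro mult_mono) (auto simp: mult.commute)
  ultimately have num: "\<bar>X a q * (\<Sum>c<m. X c p * A b c) + (\<Sum>c<m. A a c * X c p) * X b q\<bar>
      \<le> 2 * K * B\<^sup>2"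
    by (simp add: power2_eq_square algebra_simps abs_triangle_ineq[THEN order_trans])
  have "1 / real n \<le> 1"
    by (cases "n = 0") (simp_all add: divide_le_eq_1)
  then have "1 / real n * \<bar>X a q * (\<Sum>c<m. X c p * A b c) + (\<Sum>c<m. A a c * X c p) * X b q\<bar>
      \<le> 1 * (2 * K * B\<^sup>2)"
    using num by (intro mult_mono) auto
  then show ?thesis
    unfolding T1_coeff_def B_def[symmetric] abs_mult by simp
qed

lemma abs_T1_coeff_id_le:
  assumes "a < m" "b < m" "p < n" "q < n"
  shows "\<bar>T1_coeff_id n X p q a b\<bar> \<le> 2 * (mat_abs_sum m n X)\<^sup>2"
proof -
  have "\<bar>T1_coeff m n X (\<lambda>a c. if a = c then 1 else 0) p q a b\<bar> \<le> 2 * 1 * (mat_abs_sum m n X)\<^sup>2"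
    using assms by (intro abs_T1_coeff_le) auto
  then show ?thesis
    using T1_coeff_identity[OF assms(1,2)] by simp
qed

lemma integral_T1_coeff:
  fixes A :: "'s \<Rightarrow> nat \<Rightarrow> nat \<Rightarrow> real"
  assumes "\<And>a c. c < m \<Longrightarrow> integrable M (\<lambda>s. A s a c)"
  shows "(\<integral>s. T1_coeff m n X (A s) p q a b \<partial>M) = T1_coeff m n X (\<lambda>a c. \<integral>s. A s a c \<partial>M) p q a b"
proof -
  have left: "integrable M (\<lambda>s. \<Sum>c<m. X c p * A s b c)"
    and right: "integrable M (\<lambda>s. \<Sum>c<m. A s a c * X c p)"
    using assms by auto
  have "(\<integral>s. (\<Sum>c<m. X c p * A s b c) \<partial>M) = (\<Sum>c<m. X c p * (\<integral>s. A s b c \<partial>M))"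
    and "(\<integral>s. (\<Sum>c<m. A s a c * X c p) \<partial>M) = (\<Sum>c<m. (\<integral>s. A s a c \<partial>M) * X c p)"
    using assms by (simp_all add: Bochner_Integration.integral_sum)
  then show ?thesis
    unfolding T1_coeff_def using left right by (simp add: Bochner_Integration.integral_add)
qed

lemma Amat_cong:
  assumes "\<And>i k. i < n \<Longrightarrow> k < nk \<Longrightarrow> WK i k = WK' i k"
    and "\<And>i k. i < n \<Longrightarrow> k < nk \<Longrightarrow> WQ i k = WQ' i k"
  shows "Amat m n nk X WK WQ \<tau> = Amat m n nk X WK' WQ' \<tau>"
proof -
  have "Ymat n nk X WK WQ = Ymat n nk X WK' WQ'"
    using assms by (auto simp: fun_eq_iff Ymat_def intro!: sum.cong)
  then show ?thesis by (simp add: fun_eq_iff Amat_def)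
qed

section \<open>The attention model\<close>

locale attention_model = std_normal_family M G "gauss_index n nk"
  for M :: "'s measure" and G and n nk :: nat +
  fixes m :: nat and X :: "nat \<Rightarrow> nat \<Rightarrow> real"
begin

abbreviation T1_sample :: "real \<Rightarrow> 's \<Rightarrow> nat \<Rightarrow> nat \<Rightarrow> real" where
  "T1_sample \<tau> s a b \<equiv>
     T1 m n nk X (\<lambda>i k. G (GK i k) s) (\<lambda>i k. G (GQ i k) s) (\<lambda>i j. G (GW i j) s) \<tau> a b"

definition key_query_index :: "gidx set" where
  "key_query_index = {GK i k | i k. i < n \<and> k < nk} \<union> {GQ i k | i k. i < n \<and> k < nk}"

(* A as a function of the key and query entries alone: this is what makes it independent of W. *)
definition attention_of_entries :: "real \<Rightarrow> (gidx \<Rightarrow> real) \<Rightarrow> nat \<Rightarrow> nat \<Rightarrow> real" where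
  "attention_of_entries \<tau> x = Amat m n nk X (\<lambda>i k. x (GK i k)) (\<lambda>i k. x (GQ i k)) \<tau>"

definition attention :: "real \<Rightarrow> 's \<Rightarrow> nat \<Rightarrow> nat \<Rightarrow> real" where
  "attention \<tau> s = Amat m n nk X (\<lambda>i k. G (GK i k) s) (\<lambda>i k. G (GQ i k) s) \<tau>"

abbreviation attention_coeff :: "real \<Rightarrow> 's \<Rightarrow> nat \<Rightarrow> nat \<Rightarrow> nat \<Rightarrow> nat \<Rightarrow> real" where
  "attention_coeff \<tau> s p q a b \<equiv> T1_coeff m n X (attention \<tau> s) p q a b"

definition scores :: "'s \<Rightarrow> nat \<Rightarrow> nat \<Rightarrow> real" where
  "scores s = Ymat n nk X (\<lambda>i k. G (GK i k) s) (\<lambda>i k. G (GQ i k) s)"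

definition softmax_dev :: "real \<Rightarrow> 's \<Rightarrow> nat \<Rightarrow> nat \<Rightarrow> real" where
  "softmax_dev \<tau> s a c = softmax_rows m (\<lambda>a c. scores s a c / \<tau>) a c - 1 / real m"

(* First-order term of softmax_dev; it is linear in the scores, hence centred. *)
definition softmax_dev_linear :: "real \<Rightarrow> 's \<Rightarrow> nat \<Rightarrow> nat \<Rightarrow> real" where
  "softmax_dev_linear \<tau> s a c = (scores s a c / \<tau> - (\<Sum>d<m. scores s a d / \<tau>) / m) / m"

definition score_energy :: "'s \<Rightarrow> real" where
  "score_energy s = (\<Sum>a<m. \<Sum>c<m. (scores s a c)\<^sup>2)"

lemma GK_GQ_in_gauss_index: "i < n \<Longrightarrow> k < nk \<Longrightarrow> GK i k \<in> gauss_index n nk \<and> GQ i k \<in> gauss_index n nk"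
  by (simp add: gauss_index_def)

lemma attention_eq_entries:
  "attention \<tau> s = attention_of_entries \<tau> (restrict (\<lambda>g. G g s) key_query_index)"
  unfolding attention_def attention_of_entries_def
  by (rule Amat_cong) (auto simp: key_query_index_def)

lemma attention_eq_softmax_dev:
  "attention \<tau> s a c = (if a = c then 1 else 0) + softmax_dev \<tau> s a c"
  by (simp add: attention_def Amat_def softmax_dev_def scores_def)

lemma measurable_attention_of_entries [measurable]:
  "(\<lambda>x. attention_of_entries \<tau> x a c) \<in> borel_measurable (PiM K (\<lambda>_. borel))"
  unfolding attention_of_entries_def Amat_def softmax_rows_def Ymat_def by measurable

lemma measurable_T1_coeff_attention_of_entries [measurable]:
  "(\<lambda>x. T1_coeff m n X (attention_of_entries \<tau> x) p q a b) \<in> borel_measurable (PiM K (\<lambda>_. borel))"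
  unfolding T1_coeff_def by measurable

lemma measurable_attention_functional:
  fixes \<Phi> :: "(nat \<Rightarrow> nat \<Rightarrow> real) \<Rightarrow> real"
  assumes "(\<lambda>x. \<Phi> (attention_of_entries \<tau> x)) \<in> borel_measurable (PiM key_query_index (\<lambda>_. borel))"
  shows "(\<lambda>s. \<Phi> (attention \<tau> s)) \<in> borel_measurable M"
proof -
  have "(\<lambda>s. restrict (\<lambda>g. G g s) key_query_index) \<in> measurable M (PiM key_query_index (\<lambda>_. borel))"
    by (rule measurable_restrict) (auto simp: key_query_index_def gauss_index_def)
  from measurable_compose[OF this assms] show ?thesis
    by (simp add: attention_eq_entries)
qed

lemma integrable_attention_functional:
  fixes \<Phi> :: "(nat \<Rightarrow> nat \<Rightarrow> real) \<Rightarrow> real"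
  assumes "(\<lambda>x. \<Phi> (attention_of_entries \<tau> x)) \<in> borel_measurable (PiM key_query_index (\<lambda>_. borel))"
    and "\<And>s. \<bar>\<Phi> (attention \<tau> s)\<bar> \<le> C"
  shows "integrable M (\<lambda>s. \<Phi> (attention \<tau> s))"
  using assms by (intro integrable_const_bound[where B=C] AE_I2 measurable_attention_functional) auto

lemma indep_value_weights_attention:
  fixes \<Phi> :: "(nat \<Rightarrow> nat \<Rightarrow> real) \<Rightarrow> real"
  assumes K: "K \<subseteq> {GW i j | i j. i < n \<and> j < n}" and f: "f \<in> borel_measurable (PiM K (\<lambda>_. borel))"
    and \<Phi>: "(\<lambda>x. \<Phi> (attention_of_entries \<tau> x)) \<in> borel_measurable (PiM key_query_index (\<lambda>_. borel))"
  shows "indep_var borel (\<lambda>s. f (restrict (\<lambda>g. G g s) K)) borel (\<lambda>s. \<Phi> (attention \<tau> s))"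
  by (rule indep_var_disjoint_blocks[OF indep _ _ _ f \<Phi>])
     (use K in \<open>auto simp: key_query_index_def gauss_index_def attention_eq_entries\<close>)

lemma abs_softmax_dev_le_one: "c < m \<Longrightarrow> \<bar>softmax_dev \<tau> s a c\<bar> \<le> 1"
  unfolding softmax_dev_def by (rule abs_softmax_rows_minus_uniform_le_one)

lemma abs_attention_le:
  assumes "a < m" "c < m"
  shows "\<bar>attention \<tau> s a c\<bar> \<le> 2"
  using abs_softmax_dev_le_one[OF assms(2), of \<tau> s a] by (auto simp: attention_eq_softmax_dev abs_le_iff)

lemma abs_attention_coeff_le:
  assumes "a < m" "b < m" "p < n" "q < n"
  shows "\<bar>attention_coeff \<tau> s p q a b\<bar> \<le> 2 * 2 * (mat_abs_sum m n X)\<^sup>2"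
  using assms by (intro abs_T1_coeff_le abs_attention_le)

lemma integrable_attention_coeff:
  assumes "a < m" "b < m" "p < n" "q < n"
  shows "integrable M (\<lambda>s. attention_coeff \<tau> s p q a b)"
  by (rule integrable_attention_functional[where \<Phi>="\<lambda>A. T1_coeff m n X A p q a b"])
     (use assms abs_attention_coeff_le in auto)

lemma integrable_attention_coeff_mult:
  assumes "a < m" "b < m" "d < m" "w < m" "p < n" "q < n" "r < n" "t < n"
  shows "integrable M (\<lambda>s. attention_coeff \<tau> s p q a b * attention_coeff \<tau> s r t d w)"
proof (rule integrable_attention_functional[where \<Phi>="\<lambda>A. T1_coeff m n X A p q a b * T1_coeff m n X A r t d w"])
  fix s
  show "\<bar>attention_coeff \<tau> s p q a b * attention_coeff \<tau> s r t d w\<bar>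
      \<le> (2 * 2 * (mat_abs_sum m n X)\<^sup>2) * (2 * 2 * (mat_abs_sum m n X)\<^sup>2)"
    unfolding abs_mult using assms by (intro mult_mono abs_attention_coeff_le) auto
qed measurable

lemma T1_sample_eq_sum:
  "T1_sample \<tau> s a b = (\<Sum>p<n. \<Sum>q<n. G (GW p q) s * attention_coeff \<tau> s p q a b)"
  unfolding T1_eq_sum_T1_coeff attention_def ..

lemma integral_value_weight_mult_attention_coeff:
  assumes "a < m" "b < m" "p < n" "q < n"
  shows "integrable M (\<lambda>s. G (GW p q) s * attention_coeff \<tau> s p q a b)"
    and "(\<integral>s. G (GW p q) s * attention_coeff \<tau> s p q a b \<partial>M) = 0"
proof -
  have "indep_var borel (\<lambda>s. restrict (\<lambda>g. G g s) {GW p q} (GW p q))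
      borel (\<lambda>s. attention_coeff \<tau> s p q a b)"
    using assms by (intro indep_value_weights_attention) auto
  then have indep: "indep_var borel (G (GW p q)) borel (\<lambda>s. attention_coeff \<tau> s p q a b)"
    by simp
  have GW: "GW p q \<in> gauss_index n nk"
    using assms by (simp add: gauss_index_def)
  have coeff: "integrable M (\<lambda>s. attention_coeff \<tau> s p q a b)"
    using assms by (rule integrable_attention_coeff)
  show "integrable M (\<lambda>s. G (GW p q) s * attention_coeff \<tau> s p q a b)"
    by (rule indep_var_integrable[OF indep integrable_entry[OF GW] coeff])
  show "(\<integral>s. G (GW p q) s * attention_coeff \<tau> s p q a b \<partial>M) = 0"
    using indep_var_lebesgue_integral[OF indep integrable_entry[OF GW] coeff] expectation_entry[OF GW]
    by simp
qed

lemma integral_value_weights_mult_attention_coeff: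
  assumes "a < m" "b < m" "d < m" "w < m" "p < n" "q < n" "r < n" "t < n"
  shows "integrable M (\<lambda>s. (G (GW p q) s * attention_coeff \<tau> s p q a b)
                         * (G (GW r t) s * attention_coeff \<tau> s r t d w))"
    and "(\<integral>s. (G (GW p q) s * attention_coeff \<tau> s p q a b)
              * (G (GW r t) s * attention_coeff \<tau> s r t d w) \<partial>M)
       = (if p = r \<and> q = t then \<integral>s. attention_coeff \<tau> s p q a b * attention_coeff \<tau> s r t d w \<partial>M else 0)"
proof -
  let ?\<Phi> = "\<lambda>s. attention_coeff \<tau> s p q a b * attention_coeff \<tau> s r t d w"
  have "indep_var
      borel (\<lambda>s. restrict (\<lambda>g. G g s) {GW p q, GW r t} (GW p q) * restrict (\<lambda>g. G g s) {GW p q, GW r t} (GW r t))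
      borel ?\<Phi>"
    using assms
    by (intro indep_value_weights_attention[where \<Phi>="\<lambda>A. T1_coeff m n X A p q a b * T1_coeff m n X A r t d w"])
       auto
  then have indep: "indep_var borel (\<lambda>s. G (GW p q) s * G (GW r t) s) borel ?\<Phi>"
    by simp
  have GW: "GW p q \<in> gauss_index n nk" "GW r t \<in> gauss_index n nk"
    using assms by (simp_all add: gauss_index_def)
  have int: "integrable M (\<lambda>s. G (GW p q) s * G (GW r t) s)" "integrable M ?\<Phi>"
    using integrable_entry_mult[OF GW] integrable_attention_coeff_mult[OF assms] by auto
  have reorder: "(\<lambda>s. (G (GW p q) s * attention_coeff \<tau> s p q a b) * (G (GW r t) s * attention_coeff \<tau> s r t d w))
      = (\<lambda>s. (G (GW p q) s * G (GW r t) s) * ?\<Phi> s)"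
    by (simp add: fun_eq_iff mult_ac)
  show "integrable M (\<lambda>s. (G (GW p q) s * attention_coeff \<tau> s p q a b)
                         * (G (GW r t) s * attention_coeff \<tau> s r t d w))"
    unfolding reorder by (rule indep_var_integrable[OF indep int])
  show "(\<integral>s. (G (GW p q) s * attention_coeff \<tau> s p q a b)
              * (G (GW r t) s * attention_coeff \<tau> s r t d w) \<partial>M)
       = (if p = r \<and> q = t then \<integral>s. ?\<Phi> s \<partial>M else 0)"
    unfolding reorder indep_var_lebesgue_integral[OF indep int] expectation_entry_mult[OF GW] by simp
qed

lemma integral_T1_sample:
  assumes "a < m" "b < m"
  shows "(\<integral>s. T1_sample \<tau> s a b \<partial>M) = 0"
  unfolding T1_sample_eq_sum
  by (subst integral_sum_sum) (use assms integral_value_weight_mult_attention_coeff in auto)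

lemma integral_T1_sample_mult:
  assumes "a < m" "b < m" "d < m" "w < m"
  shows "(\<integral>s. T1_sample \<tau> s a b * T1_sample \<tau> s d w \<partial>M)
       = (\<Sum>p<n. \<Sum>q<n. \<integral>s. attention_coeff \<tau> s p q a b * attention_coeff \<tau> s p q d w \<partial>M)"
proof -
  have "(\<integral>s. T1_sample \<tau> s a b * T1_sample \<tau> s d w \<partial>M)
      = (\<Sum>p<n. \<Sum>q<n. \<integral>s. (\<Sum>r<n. \<Sum>t<n. (G (GW p q) s * attention_coeff \<tau> s p q a b)
                                            * (G (GW r t) s * attention_coeff \<tau> s r t d w)) \<partial>M)"
    unfolding T1_sample_eq_sum sum_sum_mult_sum_sum
    by (subst integral_sum_sum)
       (auto intro!: Bochner_Integration.integrable_sum integral_value_weights_mult_attention_coeff(1)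
         simp: assms)
  also have "\<dots> = (\<Sum>p<n. \<Sum>q<n. \<Sum>r<n. \<Sum>t<n. if p = r \<and> q = t then
      \<integral>s. attention_coeff \<tau> s p q a b * attention_coeff \<tau> s r t d w \<partial>M else 0)"
    by (intro sum.cong refl, subst integral_sum_sum)
       (use assms integral_value_weights_mult_attention_coeff in auto)
  also have "\<dots> = (\<Sum>p<n. \<Sum>q<n. \<integral>s. attention_coeff \<tau> s p q a b * attention_coeff \<tau> s p q d w \<partial>M)"
    by (simp add: sum_sum_delta)
  finally show ?thesis .
qed

lemma scores_eq_sum:
  "scores s a c = (\<Sum>i<n. \<Sum>j<n. \<Sum>k<nk. (X a i * X c j / n) * (G (GK i k) s * G (GQ j k) s))"
  unfolding scores_def Ymat_def by (simp add: sum_distrib_left mult_ac)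

lemma integrable_scores: "integrable M (\<lambda>s. scores s a c)"
  unfolding scores_eq_sum
  by (auto intro!: Bochner_Integration.integrable_sum integrable_mult_right integrable_entry_mult
           simp: GK_GQ_in_gauss_index)

lemma integral_scores: "(\<integral>s. scores s a c \<partial>M) = 0"
  unfolding scores_eq_sum
  by (intro integral_sum_eq_zero Bochner_Integration.integrable_sum integrable_mult_right integrable_entry_mult)
     (auto simp: GK_GQ_in_gauss_index expectation_entry_mult)

lemma integrable_scores_square: "integrable M (\<lambda>s. (scores s a c)\<^sup>2)"
  unfolding power2_eq_square scores_eq_sum
  by (simp only: sum_distrib_right, simp only: sum_distrib_left)
     (auto intro!: Bochner_Integration.integrable_sum integrable_entry_mult_pairs simp: GK_GQ_in_gauss_index)

lemma integrable_score_energy: "integrable M score_energy"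
  unfolding score_energy_def[abs_def]
  by (auto intro!: Bochner_Integration.integrable_sum integrable_scores_square)

lemma score_energy_nonneg: "0 \<le> score_energy s"
  unfolding score_energy_def by (intro sum_nonneg) auto

lemma abs_scores_le_sqrt_score_energy:
  assumes "a < m" "c < m"
  shows "\<bar>scores s a c\<bar> \<le> sqrt (score_energy s)"
proof -
  have "(scores s a c)\<^sup>2 \<le> (\<Sum>c<m. (scores s a c)\<^sup>2)"
    using assms by (intro member_le_sum) auto
  also have "\<dots> \<le> score_energy s"
    unfolding score_energy_def using assms by (intro member_le_sum[of a]) (auto intro: sum_nonneg)
  finally show ?thesis
    using real_sqrt_le_mono by fastforce
qed

lemma abs_softmax_dev_le:
  assumes "0 < \<tau>" "a < m" "c < m"
  shows "\<bar>softmax_dev \<tau> s a c\<bar> \<le> 26 * (sqrt (score_energy s) / \<tau>)"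
  unfolding softmax_dev_def using assms
  by (intro abs_softmax_rows_minus_uniform_le)
     (auto simp: abs_divide divide_right_mono abs_scores_le_sqrt_score_energy)

lemma abs_softmax_dev_minus_linear_le:
  assumes "0 < \<tau>" "a < m" "c < m"
  shows "\<bar>softmax_dev \<tau> s a c - softmax_dev_linear \<tau> s a c\<bar> \<le> 26 * (score_energy s / \<tau>\<^sup>2)"
proof -
  have "\<bar>softmax_dev \<tau> s a c - softmax_dev_linear \<tau> s a c\<bar> \<le> 26 * (sqrt (score_energy s) / \<tau>)\<^sup>2"
    unfolding softmax_dev_def softmax_dev_linear_def using assms
    by (intro abs_softmax_rows_minus_linearization_le)
       (auto simp: abs_divide divide_right_mono abs_scores_le_sqrt_score_energy)
  then show ?thesis
    using score_energy_nonneg by (simp add: power_divide)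
qed

lemma measurable_softmax_dev [measurable]: "(\<lambda>s. softmax_dev \<tau> s a c) \<in> borel_measurable M"
proof -
  have "(\<lambda>s. attention \<tau> s a c - (if a = c then 1 else 0)) \<in> borel_measurable M"
    by (rule measurable_attention_functional[where \<Phi>="\<lambda>A. A a c - (if a = c then 1 else 0)"]) measurable
  moreover have "(\<lambda>s. attention \<tau> s a c - (if a = c then 1 else 0)) = (\<lambda>s. softmax_dev \<tau> s a c)"
    by (simp add: attention_eq_softmax_dev)
  ultimately show ?thesis by simp
qed

lemma integrable_softmax_dev:
  assumes "c < m"
  shows "integrable M (\<lambda>s. softmax_dev \<tau> s a c)"
proof (rule integrable_const_bound[where B=1])
  show "AE s in M. norm (softmax_dev \<tau> s a c) \<le> 1"
    using abs_softmax_dev_le_one[OF assms] by simp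
qed measurable

lemma integral_softmax_dev_linear: "(\<integral>s. softmax_dev_linear \<tau> s a c \<partial>M) = 0"
  unfolding softmax_dev_linear_def
  by (simp add: Bochner_Integration.integral_sum integrable_scores integral_scores)

lemma abs_integral_softmax_dev_le:
  assumes "0 < \<tau>" "a < m" "c < m"
  shows "\<bar>\<integral>s. softmax_dev \<tau> s a c \<partial>M\<bar> \<le> 26 * ((\<integral>s. score_energy s \<partial>M) / \<tau>\<^sup>2)"
proof -
  have linear: "integrable M (\<lambda>s. softmax_dev_linear \<tau> s a c)"
    unfolding softmax_dev_linear_def
    by (intro Bochner_Integration.integrable_diff integrable_divide_zero Bochner_Integration.integrable_sum
        integrable_scores)
  have "(\<integral>s. softmax_dev \<tau> s a c \<partial>M) = (\<integral>s. softmax_dev \<tau> s a c - softmax_dev_linear \<tau> s a c \<partial>M)"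
    using integrable_softmax_dev[OF assms(3)] linear
    by (simp add: Bochner_Integration.integral_diff integral_softmax_dev_linear)
  also have "\<bar>\<dots>\<bar> \<le> (\<integral>s. 26 * (score_energy s / \<tau>\<^sup>2) \<partial>M)"
  proof (rule abs_integral_le_integral)
    show "integrable M (\<lambda>s. softmax_dev \<tau> s a c - softmax_dev_linear \<tau> s a c)"
      using integrable_softmax_dev[OF assms(3)] linear by (rule Bochner_Integration.integrable_diff)
    show "integrable M (\<lambda>s. 26 * (score_energy s / \<tau>\<^sup>2))"
      by (intro integrable_mult_right integrable_divide_zero integrable_score_energy)
  qed (rule abs_softmax_dev_minus_linear_le[OF assms])
  also have "\<dots> = 26 * ((\<integral>s. score_energy s \<partial>M) / \<tau>\<^sup>2)"
    by simp
  finally show ?thesis .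
qed

lemma attention_coeff_eq:
  assumes "a < m" "b < m"
  shows "attention_coeff \<tau> s p q a b = T1_coeff_id n X p q a b + T1_coeff m n X (softmax_dev \<tau> s) p q a b"
proof -
  have "attention \<tau> s = (\<lambda>a c. (if a = c then 1 else 0) + softmax_dev \<tau> s a c)"
    by (simp add: fun_eq_iff attention_eq_softmax_dev)
  then show ?thesis
    using T1_coeff_identity[OF assms] by (simp add: T1_coeff_add)
qed

lemma measurable_T1_coeff_softmax_dev [measurable]:
  "(\<lambda>s. T1_coeff m n X (softmax_dev \<tau> s) p q a b) \<in> borel_measurable M"
  unfolding T1_coeff_def by measurable

lemma abs_T1_coeff_softmax_dev_le:
  assumes "0 < \<tau>" "a < m" "b < m" "p < n" "q < n"
  shows "\<bar>T1_coeff m n X (softmax_dev \<tau> s) p q a b\<bar>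
    \<le> 2 * (26 * (sqrt (score_energy s) / \<tau>)) * (mat_abs_sum m n X)\<^sup>2"
  using assms by (intro abs_T1_coeff_le abs_softmax_dev_le)

lemma integrable_T1_coeff_softmax_dev:
  assumes "a < m" "b < m" "p < n" "q < n"
  shows "integrable M (\<lambda>s. T1_coeff m n X (softmax_dev \<tau> s) p q a b)"
proof (rule integrable_const_bound[where B="2 * 1 * (mat_abs_sum m n X)\<^sup>2"])
  show "AE s in M. norm (T1_coeff m n X (softmax_dev \<tau> s) p q a b) \<le> 2 * 1 * (mat_abs_sum m n X)\<^sup>2"
    using assms by (intro AE_I2) (simp only: real_norm_def, intro abs_T1_coeff_le abs_softmax_dev_le_one)
qed measurable

lemma integrable_T1_coeff_softmax_dev_mult:
  assumes "a < m" "b < m" "d < m" "w < m" "p < n" "q < n"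
  shows "integrable M
    (\<lambda>s. T1_coeff m n X (softmax_dev \<tau> s) p q a b * T1_coeff m n X (softmax_dev \<tau> s) p q d w)"
proof (rule integrable_const_bound[where B="(2 * 1 * (mat_abs_sum m n X)\<^sup>2) * (2 * 1 * (mat_abs_sum m n X)\<^sup>2)"])
  have "\<bar>T1_coeff m n X (softmax_dev \<tau> s) p q a b\<bar> * \<bar>T1_coeff m n X (softmax_dev \<tau> s) p q d w\<bar>
      \<le> (2 * 1 * (mat_abs_sum m n X)\<^sup>2) * (2 * 1 * (mat_abs_sum m n X)\<^sup>2)" for s
    using assms by (intro mult_mono abs_T1_coeff_le abs_softmax_dev_le_one) auto
  then show "AE s in M.
      norm (T1_coeff m n X (softmax_dev \<tau> s) p q a b * T1_coeff m n X (softmax_dev \<tau> s) p q d w)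
      \<le> (2 * 1 * (mat_abs_sum m n X)\<^sup>2) * (2 * 1 * (mat_abs_sum m n X)\<^sup>2)"
    by (simp add: abs_mult)
qed measurable

lemma abs_integral_T1_coeff_softmax_dev_le:
  assumes "0 < \<tau>" "a < m" "b < m" "p < n" "q < n"
  shows "\<bar>\<integral>s. T1_coeff m n X (softmax_dev \<tau> s) p q a b \<partial>M\<bar>
    \<le> 2 * (26 * ((\<integral>s. score_energy s \<partial>M) / \<tau>\<^sup>2)) * (mat_abs_sum m n X)\<^sup>2"
proof -
  have "(\<integral>s. T1_coeff m n X (softmax_dev \<tau> s) p q a b \<partial>M)
      = T1_coeff m n X (\<lambda>a c. \<integral>s. softmax_dev \<tau> s a c \<partial>M) p q a b"
    by (rule integral_T1_coeff) (rule integrable_softmax_dev)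
  then show ?thesis
    using assms by (simp only:) (intro abs_T1_coeff_le abs_integral_softmax_dev_le)
qed

lemma abs_integral_T1_coeff_softmax_dev_mult_le:
  assumes "0 < \<tau>" "a < m" "b < m" "d < m" "w < m" "p < n" "q < n"
  shows "\<bar>\<integral>s. T1_coeff m n X (softmax_dev \<tau> s) p q a b * T1_coeff m n X (softmax_dev \<tau> s) p q d w \<partial>M\<bar>
    \<le> 2704 * (mat_abs_sum m n X)^4 * ((\<integral>s. score_energy s \<partial>M) / \<tau>\<^sup>2)"
proof -
  define B where "B = mat_abs_sum m n X"
  have "\<bar>T1_coeff m n X (softmax_dev \<tau> s) p q a b * T1_coeff m n X (softmax_dev \<tau> s) p q d w\<bar>
      \<le> 2704 * B^4 * (score_energy s / \<tau>\<^sup>2)" for s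
  proof -
    have "\<bar>T1_coeff m n X (softmax_dev \<tau> s) p q a b * T1_coeff m n X (softmax_dev \<tau> s) p q d w\<bar>
        \<le> (2 * (26 * (sqrt (score_energy s) / \<tau>)) * B\<^sup>2) * (2 * (26 * (sqrt (score_energy s) / \<tau>)) * B\<^sup>2)"
      unfolding abs_mult B_def
      using assms by (intro mult_mono abs_T1_coeff_softmax_dev_le mult_nonneg_nonneg divide_nonneg_pos)
        (auto intro: score_energy_nonneg)
    also have "\<dots> = 2704 * B^4 * ((sqrt (score_energy s))\<^sup>2 / \<tau>\<^sup>2)"
      by (simp add: power2_eq_square power4_eq_xxxx field_simps)
    finally show ?thesis
      using score_energy_nonneg[of s] by simp
  qed
  then have "\<bar>\<integral>s. T1_coeff m n X (softmax_dev \<tau> s) p q a b * T1_coeff m n X (softmax_dev \<tau> s) p q d w \<partial>M\<bar>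
      \<le> (\<integral>s. 2704 * B^4 * (score_energy s / \<tau>\<^sup>2) \<partial>M)"
    using assms integrable_score_energy
    by (intro abs_integral_le_integral integrable_T1_coeff_softmax_dev_mult integrable_mult_right
        integrable_divide_zero)
  also have "\<dots> = 2704 * B^4 * ((\<integral>s. score_energy s \<partial>M) / \<tau>\<^sup>2)"
    by simp
  finally show ?thesis unfolding B_def .
qed

lemma abs_integral_attention_coeff_mult_minus_id_le:
  assumes "0 < \<tau>" "a < m" "b < m" "d < m" "w < m" "p < n" "q < n"
  shows "\<bar>(\<integral>s. attention_coeff \<tau> s p q a b * attention_coeff \<tau> s p q d w \<partial>M)
          - T1_coeff_id n X p q a b * T1_coeff_id n X p q d w\<bar>
    \<le> 2912 * (mat_abs_sum m n X)^4 * ((\<integral>s. score_energy s \<partial>M) / \<tau>\<^sup>2)"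
proof -
  define B where "B = mat_abs_sum m n X"
  define E where "E = (\<integral>s. score_energy s \<partial>M) / \<tau>\<^sup>2"
  define x where "x = T1_coeff_id n X p q a b"
  define x' where "x' = T1_coeff_id n X p q d w"
  define e where "e s = T1_coeff m n X (softmax_dev \<tau> s) p q a b" for s
  define e' where "e' s = T1_coeff m n X (softmax_dev \<tau> s) p q d w" for s
  have int: "integrable M e" "integrable M e'" "integrable M (\<lambda>s. e s * e' s)"
    unfolding e_def e'_def using assms
    by (simp_all add: integrable_T1_coeff_softmax_dev_mult integrable_T1_coeff_softmax_dev)
  have "(\<integral>s. attention_coeff \<tau> s p q a b * attention_coeff \<tau> s p q d w \<partial>M)
      = (\<integral>s. x * x' + x * e' s + x' * e s + e s * e' s \<partial>M)"
    using assms by (simp add: attention_coeff_eq x_def x'_def e_def e'_def algebra_simps)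
  also have "\<dots> = x * x' + x * integral\<^sup>L M e' + x' * integral\<^sup>L M e + (\<integral>s. e s * e' s \<partial>M)"
    using int by (simp add: Bochner_Integration.integral_add prob_space)
  finally have split: "(\<integral>s. attention_coeff \<tau> s p q a b * attention_coeff \<tau> s p q d w \<partial>M) - x * x'
      = x * integral\<^sup>L M e' + x' * integral\<^sup>L M e + (\<integral>s. e s * e' s \<partial>M)"
    by simp
  have x: "\<bar>x\<bar> \<le> 2 * B\<^sup>2" "\<bar>x'\<bar> \<le> 2 * B\<^sup>2"
    unfolding x_def x'_def B_def using assms by (simp_all add: abs_T1_coeff_id_le)
  have e: "\<bar>integral\<^sup>L M e\<bar> \<le> 2 * (26 * E) * B\<^sup>2" "\<bar>integral\<^sup>L M e'\<bar> \<le> 2 * (26 * E) * B\<^sup>2"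
    unfolding e_def e'_def E_def B_def
    using abs_integral_T1_coeff_softmax_dev_le[OF assms(1,2,3,6,7)]
      abs_integral_T1_coeff_softmax_dev_le[OF assms(1,4,5,6,7)] by auto
  have "\<bar>x * integral\<^sup>L M e'\<bar> \<le> (2 * B\<^sup>2) * (2 * (26 * E) * B\<^sup>2)"
    "\<bar>x' * integral\<^sup>L M e\<bar> \<le> (2 * B\<^sup>2) * (2 * (26 * E) * B\<^sup>2)"
    unfolding abs_mult using x e by (intro mult_mono; simp)+
  moreover have "\<bar>\<integral>s. e s * e' s \<partial>M\<bar> \<le> 2704 * B^4 * E"
    unfolding e_def e'_def E_def B_def by (rule abs_integral_T1_coeff_softmax_dev_mult_le[OF assms])
  moreover have "(2 * B\<^sup>2) * (2 * (26 * E) * B\<^sup>2) = 104 * B^4 * E"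
    by (simp add: power2_eq_square power4_eq_xxxx)
  ultimately have "\<bar>x * integral\<^sup>L M e' + x' * integral\<^sup>L M e + (\<integral>s. e s * e' s \<partial>M)\<bar> \<le> 2912 * B^4 * E"
    by linarith
  then show ?thesis
    using split by (simp only: B_def E_def x_def x'_def)
qed

definition T1_moment_constant :: real where
  "T1_moment_constant = (real n)\<^sup>2 * (2912 * (mat_abs_sum m n X)^4 * (\<integral>s. score_energy s \<partial>M))"

lemma T1_moment_constant_nonneg: "0 \<le> T1_moment_constant"
  unfolding T1_moment_constant_def using score_energy_nonneg
  by (simp add: Bochner_Integration.integral_nonneg)

lemma abs_integral_T1_sample_mult_minus_le:
  assumes "0 < \<tau>" "a < m" "b < m" "d < m" "w < m"
  shows "\<bar>(\<integral>s. T1_sample \<tau> s a b * T1_sample \<tau> s d w \<partial>M)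
         - 2 * (Vmat n X a d * Vmat n X b w + Vmat n X a w * Vmat n X b d)\<bar>
    \<le> T1_moment_constant / \<tau>\<^sup>2"
proof -
  let ?bound = "2912 * (mat_abs_sum m n X)^4 * ((\<integral>s. score_energy s \<partial>M) / \<tau>\<^sup>2)"
  have "\<bar>(\<Sum>p<n. \<Sum>q<n. \<integral>s. attention_coeff \<tau> s p q a b * attention_coeff \<tau> s p q d w \<partial>M)
        - (\<Sum>p<n. \<Sum>q<n. T1_coeff_id n X p q a b * T1_coeff_id n X p q d w)\<bar>
      \<le> (\<Sum>p<n. \<Sum>q<n. \<bar>(\<integral>s. attention_coeff \<tau> s p q a b * attention_coeff \<tau> s p q d w \<partial>M)
          - T1_coeff_id n X p q a b * T1_coeff_id n X p q d w\<bar>)"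
    unfolding sum_subtractf[symmetric] by (intro order_trans[OF sum_abs] sum_mono sum_abs)
  also have "\<dots> \<le> (\<Sum>p<n. \<Sum>q<n. ?bound)"
    using assms by (intro sum_mono abs_integral_attention_coeff_mult_minus_id_le) auto
  also have "\<dots> = T1_moment_constant / \<tau>\<^sup>2"
    by (simp add: T1_moment_constant_def power2_eq_square)
  finally show ?thesis
    unfolding integral_T1_sample_mult[OF assms(2-5)] sum_T1_coeff_id_products .
qed

end

theorem lemmaC6:
  fixes M :: "'s measure" and G :: "gidx \<Rightarrow> 's \<Rightarrow> real"
    and X :: "nat \<Rightarrow> nat \<Rightarrow> real" and m n nk \<alpha> \<beta> \<delta> \<omega> :: nat
  assumes "prob_space M"
    and "m \<ge> 1" and "n \<ge> 1" and "nk \<ge> 1"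
    and "prob_space.indep_vars M (\<lambda>_. borel) G (gauss_index n nk)"
    and "\<forall>g\<in>gauss_index n nk. distributed M lborel (G g) std_normal_density"
    and "\<alpha> < m" and "\<beta> < m" and "\<delta> < m" and "\<omega> < m"
  shows "(\<forall>\<tau>>0. (\<integral>s. T1 m n nk X (\<lambda>i k. G (GK i k) s) (\<lambda>i k. G (GQ i k) s)
                        (\<lambda>i j. G (GW i j) s) \<tau> \<alpha> \<beta> \<partial>M) = 0)
     \<and> (\<exists>C. \<forall>\<^sub>F \<tau> in at_top.
          \<bar>(\<integral>s. T1 m n nk X (\<lambda>i k. G (GK i k) s) (\<lambda>i k. G (GQ i k) s)
                        (\<lambda>i j. G (GW i j) s) \<tau> \<alpha> \<beta>
                 * T1 m n nk X (\<lambda>i k. G (GK i k) s) (\<lambda>i k. G (GQ i k) s)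
                        (\<lambda>i j. G (GW i j) s) \<tau> \<delta> \<omega> \<partial>M)
           - 2 * (Vmat n X \<alpha> \<delta> * Vmat n X \<beta> \<omega> + Vmat n X \<alpha> \<omega> * Vmat n X \<beta> \<delta>)\<bar>
          \<le> C * real nk / \<tau>\<^sup>2)"
proof -
  have "std_normal_family M G (gauss_index n nk)"
    unfolding std_normal_family_def std_normal_family_axioms_def using assms(1,5,6) by blast
  then interpret attention_model M G n nk m X
    unfolding attention_model_def .
  have nk: "T1_moment_constant / \<tau>\<^sup>2 \<le> T1_moment_constant * real nk / \<tau>\<^sup>2" for \<tau> :: real
    using T1_moment_constant_nonneg assms(4) by (simp add: divide_right_mono mult_le_cancel_left1)
  show ?thesis
    using integral_T1_sample[OF assms(7,8)]
    by (intro conjI exI[where x = T1_moment_constant] allI impI eventually_mono[OF eventually_gt_at_top[of 0]]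
        order_trans[OF abs_integral_T1_sample_mult_minus_le[OF _ assms(7-10)] nk]) auto
qed

end
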